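(* Let $M$ be a $k\times k$ matrix (for some $k\ge1$) with all entries positive integers such that $M^2=5M$. Then, up to conjugation by a permutation matrix, $M$ is one of the following: $N_1=(5)$, $N_2=\begin{pmatrix}4&1\\4&1\end{pmatrix}$, $N_3=\begin{pmatrix}4&4\\1&1\end{pmatrix}$, $N_4=\begin{pmatrix}4&2\\2&1\end{pmatrix}$, $N_5=\begin{pmatrix}3&6\\1&2\end{pmatrix}$, $N_6=\begin{pmatrix}3&3\\2&2\end{pmatrix}$, $N_7=\begin{pmatrix}3&2\\3&2\end{pmatrix}$, $N_8=\begin{pmatrix}3&1\\6&2\end{pmatrix}$, $N_9=\begin{pmatrix}3&1&1\\3&1&1\\3&1&1\end{pmatrix}$, $N_{10}=\begin{pmatrix}3&3&3\\1&1&1\\1&1&1\end{pmatrix}$, $N_{11}=\begin{pmatrix}2&2&2\\2&2&2\\1&1&1\end{pmatrix}$, $N_{12}=\begin{pmatrix}2&4&2\\1&2&1\\1&2&1\end{pmatrix}$, $N_{13}=\begin{pmatrix}2&2&1\\2&2&1\\2&2&1\end{pmatrix}$, $N_{14}$ = the $5\times5$ all-ones matrix, $N_{15}=\begin{pmatrix}2&1&1&1\\2&1&1&1\\2&1&1&1\\2&1&1&1\end{pmatrix}$, $N_{16}=\begin{pmatrix}2&2&2&2\\1&1&1&1\\1&1&1&1\\1&1&1&1\end{pmatrix}$.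
   Context: Conjugation by a permutation matrix means replacing $M$ by $PMP^{-1}$ for a permutation matrix $P$ (simultaneous permutation of rows and columns). *)

theory Defs
  imports "Jordan_Normal_Form.Matrix" "HOL-Combinatorics.Permutations"
begin

definition perm_matrix :: "nat \<Rightarrow> (nat \<Rightarrow> nat) \<Rightarrow> int mat" where
  "perm_matrix n p = mat n n (\<lambda>(i, j). if p j = i then 1 else 0)"

definition perm_conj :: "int mat \<Rightarrow> int mat \<Rightarrow> bool" where
  "perm_conj M N \<longleftrightarrow> (\<exists>p Pinv. p permutes {..<dim_row N} \<and>
      Pinv \<in> carrier_mat (dim_row N) (dim_row N) \<and>
      perm_matrix (dim_row N) p * Pinv = 1\<^sub>m (dim_row N) \<and>
      Pinv * perm_matrix (dim_row N) p = 1\<^sub>m (dim_row N) \<and>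
      M = perm_matrix (dim_row N) p * N * Pinv)"

definition N1 :: "int mat" where "N1 = mat_of_rows_list 1 [[5]]"
definition N2 :: "int mat" where "N2 = mat_of_rows_list 2 [[4,1],[4,1]]"
definition N3 :: "int mat" where "N3 = mat_of_rows_list 2 [[4,4],[1,1]]"
definition N4 :: "int mat" where "N4 = mat_of_rows_list 2 [[4,2],[2,1]]"
definition N5 :: "int mat" where "N5 = mat_of_rows_list 2 [[3,6],[1,2]]"
definition N6 :: "int mat" where "N6 = mat_of_rows_list 2 [[3,3],[2,2]]"
definition N7 :: "int mat" where "N7 = mat_of_rows_list 2 [[3,2],[3,2]]"
definition N8 :: "int mat" where "N8 = mat_of_rows_list 2 [[3,1],[6,2]]"
definition N9 :: "int mat" where "N9 = mat_of_rows_list 3 [[3,1,1],[3,1,1],[3,1,1]]"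
definition N10 :: "int mat" where "N10 = mat_of_rows_list 3 [[3,3,3],[1,1,1],[1,1,1]]"
definition N11 :: "int mat" where "N11 = mat_of_rows_list 3 [[2,2,2],[2,2,2],[1,1,1]]"
definition N12 :: "int mat" where "N12 = mat_of_rows_list 3 [[2,4,2],[1,2,1],[1,2,1]]"
definition N13 :: "int mat" where "N13 = mat_of_rows_list 3 [[2,2,1],[2,2,1],[2,2,1]]"
definition N14 :: "int mat" where "N14 = mat 5 5 (\<lambda>_. 1)"
definition N15 :: "int mat" where "N15 = mat_of_rows_list 4 [[2,1,1,1],[2,1,1,1],[2,1,1,1],[2,1,1,1]]"
definition N16 :: "int mat" where "N16 = mat_of_rows_list 4 [[2,2,2,2],[1,1,1,1],[1,1,1,1],[1,1,1,1]]"

end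

theory Submission
  imports Defs
begin

(*
  Positivity and M^2 = 5 M force M to have rank one: for two columns j, j' pick the row i0
  minimising M(i,j) / M(i,j'); row i0 of M^2 = 5 M then writes 0 as a sum of nonnegative
  terms, so the two columns are proportional.  Hence M(i,j) M(j,i) = M(i,i) M(j,j) and the
  trace of M is 5.  After sorting the diagonal decreasingly by a simultaneous permutation of
  rows and columns, the diagonal is a partition of 5 into positive parts, each pair
  M(i,j), M(j,i) factorises M(i,i) M(j,j), and M(i,j) M(j,l) = M(j,j) M(i,l) determines the
  remaining entries; the cases that survive are exactly N1, ..., N16.
*)

lemma index_mult_mat_sum:
  assumes "A \<in> carrier_mat m n" "B \<in> carrier_mat n q" "i < m" "j < q"
  shows "(A * B) $$ (i, j) = (\<Sum>l<n. A $$ (i, l) * B $$ (l, j))"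
  using assms by (auto simp: scalar_prod_def atLeast0LessThan intro!: sum.cong)

lemma permutes_less: "p permutes {..<n} \<Longrightarrow> i < n \<Longrightarrow> p i < n"
  using permutes_in_image by fastforce

lemma perm_matrix_dim [simp]:
  "dim_row (perm_matrix n p) = n" "dim_col (perm_matrix n p) = n"
  by (simp_all add: perm_matrix_def)

lemma perm_matrix_carrier [simp]: "perm_matrix n p \<in> carrier_mat n n"
  by (simp add: perm_matrix_def)

lemma perm_matrix_index:
  "i < n \<Longrightarrow> j < n \<Longrightarrow> perm_matrix n p $$ (i, j) = (if p j = i then 1 else 0)"
  by (simp add: perm_matrix_def)

lemma mult_perm_matrix_index:
  assumes "A \<in> carrier_mat m n" "i < m" "j < n" "p j < n"
  shows "(A * perm_matrix n p) $$ (i, j) = A $$ (i, p j)"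
proof -
  have "(A * perm_matrix n p) $$ (i, j) = (\<Sum>l<n. A $$ (i, l) * perm_matrix n p $$ (l, j))"
    using assms by (intro index_mult_mat_sum) auto
  also have "\<dots> = (\<Sum>l<n. if l = p j then A $$ (i, l) else 0)"
    using assms by (intro sum.cong) (auto simp: perm_matrix_index)
  also have "\<dots> = A $$ (i, p j)"
    using assms(4) by simp
  finally show ?thesis .
qed

lemma perm_matrix_mult_index:
  assumes "p permutes {..<m}" "A \<in> carrier_mat m n" "i < m" "j < n"
  shows "(perm_matrix m p * A) $$ (i, j) = A $$ (inv_into UNIV p i, j)"
proof -
  have "(perm_matrix m p * A) $$ (i, j) = (\<Sum>l<m. perm_matrix m p $$ (i, l) * A $$ (l, j))"
    using assms by (intro index_mult_mat_sum) auto
  also have "\<dots> = (\<Sum>l<m. if l = inv_into UNIV p i then A $$ (l, j) else 0)"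
    using assms by (intro sum.cong) (auto simp: perm_matrix_index permutes_inv_eq)
  also have "\<dots> = A $$ (inv_into UNIV p i, j)"
    using permutes_in_image[OF permutes_inv[OF assms(1)]] assms(3) by simp
  finally show ?thesis .
qed

lemma perm_matrix_mult_perm_matrix:
  assumes "q permutes {..<n}"
  shows "perm_matrix n p * perm_matrix n q = perm_matrix n (p \<circ> q)"
proof (rule eq_matI)
  fix i j assume "i < dim_row (perm_matrix n (p \<circ> q))" "j < dim_col (perm_matrix n (p \<circ> q))"
  then have ij: "i < n" "j < n" by simp_all
  then have "(perm_matrix n p * perm_matrix n q) $$ (i, j) = perm_matrix n p $$ (i, q j)"
    using assms by (intro mult_perm_matrix_index) (auto simp: permutes_less)
  also have "\<dots> = perm_matrix n (p \<circ> q) $$ (i, j)"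
    using ij assms by (simp add: perm_matrix_index permutes_less)
  finally show "(perm_matrix n p * perm_matrix n q) $$ (i, j) = perm_matrix n (p \<circ> q) $$ (i, j)" .
qed auto

lemma perm_matrix_id: "perm_matrix n id = 1\<^sub>m n"
  by (intro eq_matI) (auto simp: perm_matrix_index)

definition entries_permuted :: "(nat \<Rightarrow> nat \<Rightarrow> int) \<Rightarrow> nat \<Rightarrow> int mat \<Rightarrow> bool" where
  "entries_permuted a k N \<longleftrightarrow> N \<in> carrier_mat k k \<and>
     (\<exists>\<tau>. \<tau> permutes {..<k} \<and> (\<forall>i<k. \<forall>j<k. a i j = N $$ (\<tau> i, \<tau> j)))"

lemma entries_permuted_permute:
  assumes \<sigma>: "\<sigma> permutes {..<k}" and "entries_permuted (\<lambda>i j. a (\<sigma> i) (\<sigma> j)) k N"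
  shows "entries_permuted a k N"
proof -
  obtain \<tau> where N: "N \<in> carrier_mat k k" and \<tau>: "\<tau> permutes {..<k}"
    and e: "\<forall>i<k. \<forall>j<k. a (\<sigma> i) (\<sigma> j) = N $$ (\<tau> i, \<tau> j)"
    using assms(2) unfolding entries_permuted_def by blast
  have "a i j = N $$ ((\<tau> \<circ> inv_into UNIV \<sigma>) i, (\<tau> \<circ> inv_into UNIV \<sigma>) j)" if "i < k" "j < k" for i j
    using e[rule_format, of "inv_into UNIV \<sigma> i" "inv_into UNIV \<sigma> j"] that
      permutes_less[OF permutes_inv[OF \<sigma>]] permutes_inverses(1)[OF \<sigma>] by simp
  with N show ?thesis
    unfolding entries_permuted_def
    by (intro conjI exI[of _ "\<tau> \<circ> inv_into UNIV \<sigma>"] permutes_compose[OF permutes_inv[OF \<sigma>] \<tau>]) auto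
qed

lemma perm_conj_if_entries_permuted:
  assumes M: "M \<in> carrier_mat n n" and "entries_permuted (\<lambda>i j. M $$ (i, j)) n N"
  shows "perm_conj M N"
proof -
  obtain \<tau> where N: "N \<in> carrier_mat n n" and \<tau>: "\<tau> permutes {..<n}"
    and e: "\<And>i j. i < n \<Longrightarrow> j < n \<Longrightarrow> M $$ (i, j) = N $$ (\<tau> i, \<tau> j)"
    using assms(2) unfolding entries_permuted_def by blast
  let ?P = "perm_matrix n (inv_into UNIV \<tau>)" and ?Q = "perm_matrix n \<tau>"
  have inv: "inv_into UNIV \<tau> permutes {..<n}"
    using \<tau> by (rule permutes_inv)
  have "?P * ?Q = 1\<^sub>m n" "?Q * ?P = 1\<^sub>m n"
    using \<tau> inv by (simp_all add: perm_matrix_mult_perm_matrix permutes_inv_o perm_matrix_id)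
  moreover have "M = ?P * N * ?Q"
  proof (rule eq_matI)
    fix i j assume "i < dim_row (?P * N * ?Q)" "j < dim_col (?P * N * ?Q)"
    then have ij: "i < n" "j < n" using N by auto
    have "(?P * N * ?Q) $$ (i, j) = (?P * N) $$ (i, \<tau> j)"
      using ij \<tau> N by (intro mult_perm_matrix_index) (auto simp: permutes_less)
    also have "\<dots> = N $$ (\<tau> i, \<tau> j)"
      using ij \<tau> N inv
      by (simp add: perm_matrix_mult_index permutes_less permutes_inv_inv del: index_mult_mat(1))
    finally show "M $$ (i, j) = (?P * N * ?Q) $$ (i, j)"
      using e ij by simp
  qed (use M N in auto)
  ultimately show ?thesis
    unfolding perm_conj_def carrier_matD(1)[OF N] using inv perm_matrix_carrier[of n \<tau>] by blast
qed

definition rank_le_one :: "(nat \<Rightarrow> nat \<Rightarrow> int) \<Rightarrow> nat \<Rightarrow> bool" where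
  "rank_le_one a k \<longleftrightarrow> (\<forall>i<k. \<forall>i'<k. \<forall>j<k. \<forall>j'<k. a i j * a i' j' = a i j' * a i' j)"

lemma exists_min_ratio:
  fixes x y :: "nat \<Rightarrow> int"
  assumes "0 < k" "\<And>i. i < k \<Longrightarrow> 0 < y i"
  shows "\<exists>i0<k. \<forall>i<k. x i0 * y i \<le> x i * y i0"
proof -
  define f where "f i = real_of_int (x i) / real_of_int (y i)" for i
  obtain i0 where i0: "i0 < k" "f i0 = Min (f ` {..<k})"
    using Min_in[of "f ` {..<k}"] assms(1) by fastforce
  have "x i0 * y i \<le> x i * y i0" if "i < k" for i
  proof -
    have "f i0 \<le> f i" using i0 that by simp
    then have "real_of_int (x i0) * real_of_int (y i) \<le> real_of_int (x i) * real_of_int (y i0)"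
      using assms(2) that i0(1) by (simp add: f_def divide_simps)
    then show ?thesis by (simp flip: of_int_mult)
  qed
  with i0(1) show ?thesis by blast
qed

lemma columns_proportional_if_square_eq_smult:
  fixes a :: "nat \<Rightarrow> nat \<Rightarrow> int"
  assumes pos: "\<And>i j. i < k \<Longrightarrow> j < k \<Longrightarrow> 0 < a i j"
    and sq: "\<And>i j. i < k \<Longrightarrow> j < k \<Longrightarrow> (\<Sum>l<k. a i l * a l j) = c * a i j"
    and jk: "j < k" "j' < k"
  obtains i0 where "i0 < k" "\<And>l. l < k \<Longrightarrow> a i0 j' * a l j = a i0 j * a l j'"
proof -
  have "\<exists>i0<k. \<forall>l<k. a i0 j * a l j' \<le> a l j * a i0 j'"
    using jk pos by (intro exists_min_ratio) auto
  then obtain i0 where i0: "i0 < k" and min: "\<And>l. l < k \<Longrightarrow> a i0 j * a l j' \<le> a l j * a i0 j'"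
    by blast
  define w where "w l = a i0 j' * a l j - a i0 j * a l j'" for l
  have w_nonneg: "0 \<le> w l" if "l < k" for l
    using min[OF that] by (simp add: w_def algebra_simps)
  have "(\<Sum>l<k. a i0 l * w l) = a i0 j' * (\<Sum>l<k. a i0 l * a l j) - a i0 j * (\<Sum>l<k. a i0 l * a l j')"
    by (simp add: w_def sum_distrib_left sum_subtractf[symmetric] algebra_simps)
  also have "\<dots> = 0"
    using sq i0 jk by simp
  finally have sum_zero: "(\<Sum>l<k. a i0 l * w l) = 0" .
  have "0 \<le> a i0 l * w l" if "l \<in> {..<k}" for l
    using pos[OF i0, of l] w_nonneg[of l] that by simp
  with sum_zero have "\<forall>l\<in>{..<k}. a i0 l * w l = 0"
    using sum_nonneg_eq_0_iff[of "{..<k}" "\<lambda>l. a i0 l * w l"] by simp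
  then have "w l = 0" if "l < k" for l
    using pos[OF i0 that] that by (metis lessThan_iff less_irrefl mult_eq_0_iff)
  with i0 show thesis
    by (intro that) (auto simp: w_def)
qed

lemma rank_le_one_if_square_eq_smult:
  fixes a :: "nat \<Rightarrow> nat \<Rightarrow> int"
  assumes pos: "\<And>i j. i < k \<Longrightarrow> j < k \<Longrightarrow> 0 < a i j"
    and sq: "\<And>i j. i < k \<Longrightarrow> j < k \<Longrightarrow> (\<Sum>l<k. a i l * a l j) = c * a i j"
  shows "rank_le_one a k"
  unfolding rank_le_one_def
proof (intro allI impI)
  fix i i' j j' assume ik: "i < k" "i' < k" and jk: "j < k" "j' < k"
  obtain i0 where i0: "i0 < k" and ratio: "\<And>l. l < k \<Longrightarrow> a i0 j' * a l j = a i0 j * a l j'"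
    using columns_proportional_if_square_eq_smult[OF pos sq jk] by blast
  have "a i0 j' * (a i j * a i' j') = (a i0 j' * a i j) * a i' j'"
    by (simp add: algebra_simps)
  also have "\<dots> = a i j' * (a i0 j * a i' j')"
    using ratio[OF ik(1)] by (simp add: algebra_simps)
  also have "\<dots> = a i0 j' * (a i j' * a i' j)"
    using ratio[OF ik(2)] by (simp add: algebra_simps)
  finally show "a i j * a i' j' = a i j' * a i' j"
    using pos[OF i0 jk(2)] by simp
qed

lemma trace_eq_if_square_eq_smult:
  fixes a :: "nat \<Rightarrow> nat \<Rightarrow> int"
  assumes pos: "\<And>i j. i < k \<Longrightarrow> j < k \<Longrightarrow> 0 < a i j"
    and sq: "\<And>i j. i < k \<Longrightarrow> j < k \<Longrightarrow> (\<Sum>l<k. a i l * a l j) = c * a i j"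
    and rank: "rank_le_one a k" and "0 < k"
  shows "(\<Sum>i<k. a i i) = c"
proof -
  have "(\<Sum>i<k. a i i) * a 0 0 = (\<Sum>l<k. a 0 l * a l 0)"
    using rank \<open>0 < k\<close> unfolding rank_le_one_def sum_distrib_right
    by (intro sum.cong) (auto simp: mult.commute)
  also have "\<dots> = c * a 0 0"
    using sq \<open>0 < k\<close> by simp
  finally show ?thesis
    using pos[of 0 0] \<open>0 < k\<close> by simp
qed

lemma rank_le_one_permute:
  "\<sigma> permutes {..<k} \<Longrightarrow> rank_le_one a k \<Longrightarrow> rank_le_one (\<lambda>i j. a (\<sigma> i) (\<sigma> j)) k"
  by (simp add: rank_le_one_def permutes_less)

lemma exists_sorting_permutation:
  fixes d :: "nat \<Rightarrow> 'a::linordered_ab_group_add"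
  shows "\<exists>\<sigma>. \<sigma> permutes {..<n} \<and> (\<forall>i j. i \<le> j \<longrightarrow> j < n \<longrightarrow> d (\<sigma> j) \<le> d (\<sigma> i))"
proof -
  define xs where "xs = sort_key (\<lambda>i. - d i) [0..<n]"
  have "mset xs = mset [0..<n]" by (simp add: xs_def)
  then obtain \<sigma> where \<sigma>: "\<sigma> permutes {..<n}" "permute_list \<sigma> [0..<n] = xs"
    by (metis length_upt minus_nat.diff_0 mset_eq_permutation)
  have "xs ! i = \<sigma> i" if "i < n" for i
    using \<sigma> that permute_list_nth[of \<sigma> "[0..<n]"] permutes_in_image[OF \<sigma>(1)] by auto
  moreover have "sorted (map (\<lambda>i. - d i) xs)" "length xs = n"
    by (simp_all add: xs_def)
  ultimately have "d (\<sigma> j) \<le> d (\<sigma> i)" if "i \<le> j" "j < n" for i j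
    using sorted_nth_mono[of "map (\<lambda>i. - d i) xs" i j] that by auto
  with \<sigma>(1) show ?thesis by blast
qed

lemma pos_factor_le: "x * y = (c::int) \<Longrightarrow> 0 < x \<Longrightarrow> 0 < y \<Longrightarrow> x \<le> c"
  by (metis dvd_triv_left mult_pos_pos zdvd_imp_le)

lemma pos_mult_eq_2:
  fixes x y :: int assumes "x * y = 2" "0 < x" "0 < y"
  shows "x = 1 \<and> y = 2 \<or> x = 2 \<and> y = 1"
proof -
  have "x = 1 \<or> x = 2" using pos_factor_le[OF assms] assms(2) by auto
  with assms(1) show ?thesis by auto
qed

lemma pos_mult_eq_3:
  fixes x y :: int assumes "x * y = 3" "0 < x" "0 < y"
  shows "x = 1 \<and> y = 3 \<or> x = 3 \<and> y = 1"
proof -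
  have "x = 1 \<or> x = 2 \<or> x = 3" using pos_factor_le[OF assms] assms(2) by auto
  with assms(1) show ?thesis by auto presburger+
qed

lemma pos_mult_eq_4:
  fixes x y :: int assumes "x * y = 4" "0 < x" "0 < y"
  shows "x = 1 \<and> y = 4 \<or> x = 2 \<and> y = 2 \<or> x = 4 \<and> y = 1"
proof -
  have "x = 1 \<or> x = 2 \<or> x = 3 \<or> x = 4" using pos_factor_le[OF assms] assms(2) by auto
  with assms(1) show ?thesis by auto presburger+
qed

lemma pos_mult_eq_6:
  fixes x y :: int assumes "x * y = 6" "0 < x" "0 < y"
  shows "x = 1 \<and> y = 6 \<or> x = 2 \<and> y = 3 \<or> x = 3 \<and> y = 2 \<or> x = 6 \<and> y = 1"
proof -
  have "x = 1 \<or> x = 2 \<or> x = 3 \<or> x = 4 \<or> x = 5 \<or> x = 6"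
    using pos_factor_le[OF assms] assms(2) by auto
  with assms(1) show ?thesis by auto presburger+
qed

definition normal_forms :: "int mat set" where
  "normal_forms = {N1, N2, N3, N4, N5, N6, N7, N8, N9, N10, N11, N12, N13, N14, N15, N16}"

lemma normal_form_if_entries:
  assumes "N \<in> normal_forms" "N \<in> carrier_mat k k" "\<tau> permutes {..<k}"
    and "\<forall>i<k. \<forall>j<k. a i j = N $$ (\<tau> i, \<tau> j)"
  shows "\<exists>N\<in>normal_forms. entries_permuted a k N"
  using assms unfolding entries_permuted_def by blast

lemma normal_form_if_eq:
  assumes "N \<in> normal_forms" "N \<in> carrier_mat k k" "\<forall>i<k. \<forall>j<k. a i j = N $$ (i, j)"
  shows "\<exists>N\<in>normal_forms. entries_permuted a k N"
  using assms by (intro normal_form_if_entries[of N k id]) simp_all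

lemma all_less_numeral:
  "(\<forall>i<numeral n. P i) \<longleftrightarrow> (\<forall>i<pred_numeral n. P i) \<and> P (pred_numeral n)"
  by (auto simp: numeral_eq_Suc less_Suc_eq)

lemma mat_of_rows_list_carrier_iff:
  "mat_of_rows_list nc rs \<in> carrier_mat nr nc \<longleftrightarrow> length rs = nr"
  unfolding mat_of_rows_list_def by (auto dest: carrier_matD)

lemma index_mat_of_rows_list:
  "i < length rs \<Longrightarrow> j < nc \<Longrightarrow> mat_of_rows_list nc rs $$ (i, j) = rs ! i ! j"
  by (simp add: mat_of_rows_list_def)

lemmas normal_form_entries =
  normal_forms_def mat_of_rows_list_carrier_iff index_mat_of_rows_list all_less_numeral

locale sorted_rank_one_trace_five =
  fixes a :: "nat \<Rightarrow> nat \<Rightarrow> int" and k :: nat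
  assumes pos: "i < k \<Longrightarrow> j < k \<Longrightarrow> 0 < a i j"
    and rank: "rank_le_one a k"
    and diag_antimono: "i \<le> j \<Longrightarrow> j < k \<Longrightarrow> a j j \<le> a i i"
    and trace: "(\<Sum>i<k. a i i) = 5"
begin

lemma minor: "i < k \<Longrightarrow> i' < k \<Longrightarrow> j < k \<Longrightarrow> j' < k \<Longrightarrow> a i j * a i' j' = a i j' * a i' j"
  using rank unfolding rank_le_one_def by blast

lemma dim_le_5: "k \<le> 5"
proof -
  have "(\<Sum>i<k. 1) \<le> (\<Sum>i<k. a i i)"
    using pos by (intro sum_mono) (simp add: int_one_le_iff_zero_less)
  then show ?thesis using trace by simp
qed

lemma normal_form_dim_1:
  assumes "k = 1" shows "\<exists>N\<in>normal_forms. entries_permuted a k N"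
proof -
  have "a 0 0 = 5" using trace assms by simp
  then show ?thesis
    by (intro normal_form_if_eq[of N1]) (simp_all add: assms N1_def normal_form_entries)
qed

lemma normal_form_diag_4_1:
  assumes "k = 2" and d: "a 0 0 = 4" "a 1 1 = 1"
  shows "\<exists>N\<in>normal_forms. entries_permuted a k N"
proof -
  have "a 0 1 * a 1 0 = 4" "0 < a 0 1" "0 < a 1 0"
    using minor[of 0 1 1 0] pos[of 0 1] pos[of 1 0] d by (simp_all add: assms(1))
  from pos_mult_eq_4[OF this] show ?thesis
  proof (elim disjE conjE)
    assume "a 0 1 = 1" "a 1 0 = 4"
    with d show ?thesis
      by (intro normal_form_if_eq[of N2]) (simp_all add: assms(1) N2_def normal_form_entries)
  next
    assume "a 0 1 = 2" "a 1 0 = 2"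
    with d show ?thesis
      by (intro normal_form_if_eq[of N4]) (simp_all add: assms(1) N4_def normal_form_entries)
  next
    assume "a 0 1 = 4" "a 1 0 = 1"
    with d show ?thesis
      by (intro normal_form_if_eq[of N3]) (simp_all add: assms(1) N3_def normal_form_entries)
  qed
qed

lemma normal_form_diag_3_2:
  assumes "k = 2" and d: "a 0 0 = 3" "a 1 1 = 2"
  shows "\<exists>N\<in>normal_forms. entries_permuted a k N"
proof -
  have "a 0 1 * a 1 0 = 6" "0 < a 0 1" "0 < a 1 0"
    using minor[of 0 1 1 0] pos[of 0 1] pos[of 1 0] d by (simp_all add: assms(1))
  from pos_mult_eq_6[OF this] show ?thesis
  proof (elim disjE conjE)
    assume "a 0 1 = 1" "a 1 0 = 6"
    with d show ?thesis
      by (intro normal_form_if_eq[of N8]) (simp_all add: assms(1) N8_def normal_form_entries)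
  next
    assume "a 0 1 = 2" "a 1 0 = 3"
    with d show ?thesis
      by (intro normal_form_if_eq[of N7]) (simp_all add: assms(1) N7_def normal_form_entries)
  next
    assume "a 0 1 = 3" "a 1 0 = 2"
    with d show ?thesis
      by (intro normal_form_if_eq[of N6]) (simp_all add: assms(1) N6_def normal_form_entries)
  next
    assume "a 0 1 = 6" "a 1 0 = 1"
    with d show ?thesis
      by (intro normal_form_if_eq[of N5]) (simp_all add: assms(1) N5_def normal_form_entries)
  qed
qed

lemma normal_form_dim_2:
  assumes "k = 2" shows "\<exists>N\<in>normal_forms. entries_permuted a k N"
proof -
  have "a 0 0 + a 1 1 = 5" "a 1 1 \<le> a 0 0" "0 < a 1 1"
    using trace diag_antimono[of 0 1] pos[of 1 1] by (simp_all add: assms eval_nat_numeral)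
  then have "a 0 0 = 4 \<and> a 1 1 = 1 \<or> a 0 0 = 3 \<and> a 1 1 = 2"
    by auto
  with assms show ?thesis
    using normal_form_diag_4_1 normal_form_diag_3_2 by blast
qed

lemma normal_form_diag_3_1_1:
  assumes "k = 3" and d: "a 0 0 = 3" "a 1 1 = 1" "a 2 2 = 1"
  shows "\<exists>N\<in>normal_forms. entries_permuted a k N"
proof -
  have "a 1 2 * a 2 1 = 1" "0 < a 1 2" "0 < a 2 1"
    using minor[of 1 2 2 1] pos[of 1 2] pos[of 2 1] d by (simp_all add: assms(1))
  then have e: "a 1 2 = 1" "a 2 1 = 1"
    by (simp_all add: pos_zmult_eq_1_iff)
  have m: "a 0 1 * a 1 2 = a 0 2 * a 1 1" "a 2 1 * a 1 0 = a 2 0 * a 1 1"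
    using minor[of 0 1 1 2] minor[of 2 1 1 0] by (simp_all add: assms(1))
  have "a 0 1 * a 1 0 = 3" "0 < a 0 1" "0 < a 1 0"
    using minor[of 0 1 1 0] pos[of 0 1] pos[of 1 0] d by (simp_all add: assms(1))
  from pos_mult_eq_3[OF this] show ?thesis
  proof (elim disjE conjE)
    assume f: "a 0 1 = 1" "a 1 0 = 3"
    with m d e have "a 0 2 = 1" "a 2 0 = 3" by simp_all
    with d e f show ?thesis
      by (intro normal_form_if_eq[of N9]) (simp_all add: assms(1) N9_def normal_form_entries)
  next
    assume f: "a 0 1 = 3" "a 1 0 = 1"
    with m d e have "a 0 2 = 3" "a 2 0 = 1" by simp_all
    with d e f show ?thesis
      by (intro normal_form_if_eq[of N10]) (simp_all add: assms(1) N10_def normal_form_entries)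
  qed
qed

lemma normal_form_diag_2_2_1:
  assumes "k = 3" and d: "a 0 0 = 2" "a 1 1 = 2" "a 2 2 = 1"
  shows "\<exists>N\<in>normal_forms. entries_permuted a k N"
proof -
  have m: "a 0 1 * a 1 2 = a 0 2 * a 1 1" "a 1 0 * a 0 2 = a 1 2 * a 0 0"
    using minor[of 0 1 1 2] minor[of 1 0 0 2] by (simp_all add: assms(1))
  have "a 0 2 * a 2 0 = 2" "0 < a 0 2" "0 < a 2 0" "a 1 2 * a 2 1 = 2" "0 < a 1 2" "0 < a 2 1"
    using minor[of 0 2 2 0] minor[of 1 2 2 1] pos[of 0 2] pos[of 2 0] pos[of 1 2] pos[of 2 1] d
    by (simp_all add: assms(1))
  from pos_mult_eq_2[OF this(1-3)] pos_mult_eq_2[OF this(4-6)] show ?thesis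
  proof (elim disjE conjE)
    assume e: "a 0 2 = 1" "a 2 0 = 2" "a 1 2 = 1" "a 2 1 = 2"
    with m d have "a 0 1 = 2" "a 1 0 = 2" by simp_all
    with d e show ?thesis
      by (intro normal_form_if_eq[of N13]) (simp_all add: assms(1) N13_def normal_form_entries)
  next
    assume e: "a 0 2 = 1" "a 2 0 = 2" "a 1 2 = 2" "a 2 1 = 1"
    with m d have "a 0 1 = 1" "a 1 0 = 4" by simp_all
    \<comment> \<open>\<open>N\<^sub>1\<^sub>2\<close> with its first two rows and columns swapped: the equal diagonal
      entries 2, 2 leave their order open\<close>
    with d e show ?thesis
      by (intro normal_form_if_entries[of N12 _ "Transposition.transpose 0 1"])
        (simp_all add: assms(1) N12_def normal_form_entries permutes_swap_id transpose_def)
  next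
    assume e: "a 0 2 = 2" "a 2 0 = 1" "a 1 2 = 1" "a 2 1 = 2"
    with m d have "a 0 1 = 4" "a 1 0 = 1" by simp_all
    with d e show ?thesis
      by (intro normal_form_if_eq[of N12]) (simp_all add: assms(1) N12_def normal_form_entries)
  next
    assume e: "a 0 2 = 2" "a 2 0 = 1" "a 1 2 = 2" "a 2 1 = 1"
    with m d have "a 0 1 = 2" "a 1 0 = 2" by simp_all
    with d e show ?thesis
      by (intro normal_form_if_eq[of N11]) (simp_all add: assms(1) N11_def normal_form_entries)
  qed
qed

lemma normal_form_dim_3:
  assumes "k = 3" shows "\<exists>N\<in>normal_forms. entries_permuted a k N"
proof -
  have "a 0 0 + a 1 1 + a 2 2 = 5" "a 1 1 \<le> a 0 0" "a 2 2 \<le> a 1 1" "0 < a 2 2"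
    using trace diag_antimono[of 0 1] diag_antimono[of 1 2] pos[of 2 2]
    by (simp_all add: assms eval_nat_numeral)
  then have "a 0 0 = 3 \<and> a 1 1 = 1 \<and> a 2 2 = 1 \<or> a 0 0 = 2 \<and> a 1 1 = 2 \<and> a 2 2 = 1"
    by auto
  with assms show ?thesis
    using normal_form_diag_3_1_1 normal_form_diag_2_2_1 by blast
qed

lemma normal_form_dim_4:
  assumes "k = 4" shows "\<exists>N\<in>normal_forms. entries_permuted a k N"
proof -
  have p: "0 < a 0 1" "0 < a 1 0" "0 < a 0 2" "0 < a 2 0" "0 < a 0 3" "0 < a 3 0"
    "0 < a 1 2" "0 < a 2 1" "0 < a 1 3" "0 < a 3 1" "0 < a 2 3" "0 < a 3 2" "0 < a 3 3"
    using pos by (simp_all add: assms)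
  moreover have "a 0 0 + a 1 1 + a 2 2 + a 3 3 = 5" "a 1 1 \<le> a 0 0" "a 2 2 \<le> a 1 1" "a 3 3 \<le> a 2 2"
    using trace diag_antimono[of 0 1] diag_antimono[of 1 2] diag_antimono[of 2 3]
    by (simp_all add: assms eval_nat_numeral)
  ultimately have d: "a 0 0 = 2" "a 1 1 = 1" "a 2 2 = 1" "a 3 3 = 1" by linarith+
  have m: "a 0 1 * a 1 0 = a 0 0 * a 1 1" "a 0 2 * a 2 0 = a 0 0 * a 2 2"
      "a 0 3 * a 3 0 = a 0 0 * a 3 3" "a 1 2 * a 2 1 = a 1 1 * a 2 2"
      "a 1 3 * a 3 1 = a 1 1 * a 3 3" "a 2 3 * a 3 2 = a 2 2 * a 3 3"
      "a 1 0 * a 0 2 = a 1 2 * a 0 0" "a 1 0 * a 0 3 = a 1 3 * a 0 0"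
    using minor[of 0 1 1 0] minor[of 0 2 2 0] minor[of 0 3 3 0] minor[of 1 2 2 1] minor[of 1 3 3 1]
      minor[of 2 3 3 2] minor[of 1 0 0 2] minor[of 1 0 0 3]
    by (simp_all add: assms)
  from m(4-6) d p(7-12)
  have e: "a 1 2 = 1" "a 2 1 = 1" "a 1 3 = 1" "a 3 1 = 1" "a 2 3 = 1" "a 3 2 = 1"
    by (simp_all add: pos_zmult_eq_1_iff)
  from m(1) d have "a 0 1 * a 1 0 = 2" by simp
  from pos_mult_eq_2[OF this p(1,2)] show ?thesis
  proof (elim disjE conjE)
    assume f: "a 0 1 = 1" "a 1 0 = 2"
    with m(7,8) d e have g: "a 0 2 = 1" "a 0 3 = 1" by simp_all
    with m(2,3) d have "a 2 0 = 2" "a 3 0 = 2" by simp_all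
    with d e f g show ?thesis
      by (intro normal_form_if_eq[of N15]) (simp_all add: assms N15_def normal_form_entries)
  next
    assume f: "a 0 1 = 2" "a 1 0 = 1"
    with m(7,8) d e have g: "a 0 2 = 2" "a 0 3 = 2" by simp_all
    with m(2,3) d have "a 2 0 = 1" "a 3 0 = 1" by simp_all
    with d e f g show ?thesis
      by (intro normal_form_if_eq[of N16]) (simp_all add: assms N16_def normal_form_entries)
  qed
qed

lemma normal_form_dim_5:
  assumes "k = 5" shows "\<exists>N\<in>normal_forms. entries_permuted a k N"
proof -
  have "a 0 0 + a 1 1 + a 2 2 + a 3 3 + a 4 4 = 5"
    "0 < a 0 0" "0 < a 1 1" "0 < a 2 2" "0 < a 3 3" "0 < a 4 4"
    using trace pos by (simp_all add: assms eval_nat_numeral)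
  then have "a i i = 1" if "i < k" for i
    using that by (auto simp: assms less_Suc_eq numeral_eq_Suc)
  then have "a i j = 1" if "i < k" "j < k" for i j
    using minor[of i j j i] pos[of i j] pos[of j i] that by (simp add: pos_zmult_eq_1_iff)
  then show ?thesis
    by (intro normal_form_if_eq[of N14]) (simp_all add: assms N14_def normal_forms_def)
qed

lemma normal_form:
  assumes "0 < k" shows "\<exists>N\<in>normal_forms. entries_permuted a k N"
proof -
  have "k = 1 \<or> k = 2 \<or> k = 3 \<or> k = 4 \<or> k = 5" using assms dim_le_5 by auto
  then show ?thesis
    using normal_form_dim_1 normal_form_dim_2 normal_form_dim_3 normal_form_dim_4 normal_form_dim_5
    by blast
qed

end

lemma normal_form_if_square_eq_5:
  fixes a :: "nat \<Rightarrow> nat \<Rightarrow> int"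
  assumes "0 < k" and pos: "\<And>i j. i < k \<Longrightarrow> j < k \<Longrightarrow> 0 < a i j"
    and sq: "\<And>i j. i < k \<Longrightarrow> j < k \<Longrightarrow> (\<Sum>l<k. a i l * a l j) = 5 * a i j"
  shows "\<exists>N\<in>normal_forms. entries_permuted a k N"
proof -
  have rank: "rank_le_one a k"
    using pos sq by (rule rank_le_one_if_square_eq_smult)
  have trace: "(\<Sum>i<k. a i i) = 5"
    using pos sq rank \<open>0 < k\<close> by (rule trace_eq_if_square_eq_smult)
  obtain \<sigma> where \<sigma>: "\<sigma> permutes {..<k}"
    and sorted: "\<And>i j. i \<le> j \<Longrightarrow> j < k \<Longrightarrow> a (\<sigma> j) (\<sigma> j) \<le> a (\<sigma> i) (\<sigma> i)"
    using exists_sorting_permutation[where d = "\<lambda>i. a i i" and n = k] by blast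
  interpret sorted_rank_one_trace_five "\<lambda>i j. a (\<sigma> i) (\<sigma> j)" k
  proof
    show "0 < a (\<sigma> i) (\<sigma> j)" if "i < k" "j < k" for i j
      using pos permutes_less[OF \<sigma>] that by simp
    show "rank_le_one (\<lambda>i j. a (\<sigma> i) (\<sigma> j)) k"
      using \<sigma> rank by (rule rank_le_one_permute)
    show "(\<Sum>i<k. a (\<sigma> i) (\<sigma> i)) = 5"
      using trace sum.permute[OF \<sigma>, of "\<lambda>i. a i i"] by (simp add: comp_def)
  qed (fact sorted)
  from normal_form[OF \<open>0 < k\<close>] obtain N
    where "N \<in> normal_forms" "entries_permuted (\<lambda>i j. a (\<sigma> i) (\<sigma> j)) k N" ..
  with \<sigma> show ?thesis
    using entries_permuted_permute by blast
qed

theorem mainTheorem10: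
  fixes M :: "int mat" and k :: nat
  assumes "k \<ge> 1"
    and "M \<in> carrier_mat k k"
    and "\<forall>i<k. \<forall>j<k. M $$ (i, j) > 0"
    and "M * M = 5 \<cdot>\<^sub>m M"
  shows "\<exists>N \<in> {N1, N2, N3, N4, N5, N6, N7, N8, N9, N10, N11, N12, N13, N14, N15, N16}.
           perm_conj M N"
proof -
  have "0 < k"
    using assms(1) by simp
  moreover have "0 < M $$ (i, j)" if "i < k" "j < k" for i j
    using assms(3) that by simp
  moreover have "(\<Sum>l<k. M $$ (i, l) * M $$ (l, j)) = 5 * M $$ (i, j)" if "i < k" "j < k" for i j
    using index_mult_mat_sum[OF assms(2) assms(2) that] assms(2,4) that by simp
  ultimately obtain N where "N \<in> normal_forms" "entries_permuted (\<lambda>i j. M $$ (i, j)) k N"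
    using normal_form_if_square_eq_5[where a = "\<lambda>i j. M $$ (i, j)"] by blast
  with assms(2) show ?thesis
    unfolding normal_forms_def by (blast intro: perm_conj_if_entries_permuted)
qed

end
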